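(* Let $\alpha:U\to V$ be a surjective transmission between supertropical semirings (viewed as supertropical monoids), $M:=eU$, $N:=eV$, and let $\alpha=\mu\circ\beta\circ\lambda$ with $\lambda:U\to U_1$ an ideal compression, $\beta:U_1\to V_1$ a strict ghost contraction and $\mu:V_1\to V$ a tangible fiber contraction over $N$, where $U_1,V_1$ are supertropical monoids. Then $U_1$ and $V_1$ are supertropical semirings; hence $\lambda,\beta,\mu$ are transmissions between supertropical semirings.
   Context: All monoids are commutative. A supertropical monoid is a monoid $(U,\cdot)$ with absorbing element $0$ and distinguished idempotent $e$ with $ex=0\Rightarrow x=0$, together with a total ordering on $M:=eU$, compatible with multiplication and with $0$ least, making $M$ a bipotent semiring (addition $=\max$). $\mathcal T(U):=U\setminus eU$. Define on $U$: $x+y:=y$ if $ex<ey$, $x$ if $ex>ey$, $ex$ if $ex=ey$; $U$ is a (supertropical) semiring if this addition is associative and distributive (supertropical semirings are exactly the supertropical monoids that are semirings in this sense). A transmission $\alpha:U\to V$ is a map with $\alpha(0)=0$, $\alpha(1)=1$, multiplicative, $\alpha(e_U)=e_V$, order-preserving on $eU$; ghost part $\alpha^\nu$ = restriction to $eU$; ghost kernel $\mathfrak A_\alpha:=\{x:\alpha(x)\in eV\}$; zero kernel $\mathfrak z_\alpha:=\alpha^{-1}(0)$. A fiber contraction is a surjective transmission whose ghost part is an isomorphism; "over $N$" if the ghost part is the identity of $N$. An ideal compression is a fiber contraction over $eU$ mapping $U\setminus\mathfrak A_\alpha$ bijectively onto $\mathcal T(V)$. A transmission is tangible if $\alpha(\mathcal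 T(U))\subset\mathcal T(V)\cup\{0\}$. A ghost contraction is a transmission whose ghost part is surjective and which maps $U\setminus(eU\cup\mathfrak z_\alpha)$ bijectively onto $\mathcal T(V)$; strict if $\alpha^{-1}(0)\subset eU$. *)

theory Defs
  imports Main
begin

text \<open>A (commutative) monoid with absorbing zero, distinguished idempotent e and
a relation le intended to be a total order on the ghost ideal eU.
Elements live in a carrier set.\<close>

record 'a stm =
  stcar :: "'a set"
  smul :: "'a \<Rightarrow> 'a \<Rightarrow> 'a"
  sone :: 'a
  szero :: 'a
  se :: 'a
  sle :: "'a \<Rightarrow> 'a \<Rightarrow> bool"

definition gh :: "('a, 'b) stm_scheme \<Rightarrow> 'a set" where
  "gh U = (\<lambda>x. smul U (se U) x) ` stcar U"

definition tang :: "('a, 'b) stm_scheme \<Rightarrow> 'a set" where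
  "tang U = stcar U - gh U"

definition slt :: "('a, 'b) stm_scheme \<Rightarrow> 'a \<Rightarrow> 'a \<Rightarrow> bool" where
  "slt U x y \<longleftrightarrow> sle U x y \<and> x \<noteq> y"

definition supertropical_monoid :: "('a, 'b) stm_scheme \<Rightarrow> bool" where
  "supertropical_monoid U \<longleftrightarrow>
     (\<forall>x\<in>stcar U. \<forall>y\<in>stcar U. smul U x y \<in> stcar U) \<and>
     sone U \<in> stcar U \<and> szero U \<in> stcar U \<and> se U \<in> stcar U \<and>
     (\<forall>x\<in>stcar U. \<forall>y\<in>stcar U. \<forall>z\<in>stcar U.
        smul U (smul U x y) z = smul U x (smul U y z)) \<and>
     (\<forall>x\<in>stcar U. \<forall>y\<in>stcar U. smul U x y = smul U y x) \<and>
     (\<forall>x\<in>stcar U. smul U (sone U) x = x) \<and>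
     (\<forall>x\<in>stcar U. smul U (szero U) x = szero U) \<and>
     smul U (se U) (se U) = se U \<and>
     (\<forall>x\<in>stcar U. smul U (se U) x = szero U \<longrightarrow> x = szero U) \<and>
     \<comment> \<open>total order on M = eU\<close>
     (\<forall>x\<in>gh U. sle U x x) \<and>
     (\<forall>x\<in>gh U. \<forall>y\<in>gh U. sle U x y \<and> sle U y x \<longrightarrow> x = y) \<and>
     (\<forall>x\<in>gh U. \<forall>y\<in>gh U. \<forall>z\<in>gh U. sle U x y \<and> sle U y z \<longrightarrow> sle U x z) \<and>
     (\<forall>x\<in>gh U. \<forall>y\<in>gh U. sle U x y \<or> sle U y x) \<and>
     \<comment> \<open>compatible with multiplication, 0 least\<close>
     (\<forall>x\<in>gh U. \<forall>y\<in>gh U. \<forall>z\<in>gh U. sle U x y \<longrightarrow> sle U (smul U x z) (smul U y z)) \<and>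
     (\<forall>x\<in>gh U. sle U (szero U) x)"

definition sadd :: "('a, 'b) stm_scheme \<Rightarrow> 'a \<Rightarrow> 'a \<Rightarrow> 'a" where
  "sadd U x y =
     (let ex = smul U (se U) x; ey = smul U (se U) y in
      if slt U ex ey then y else if slt U ey ex then x else ex)"

definition supertropical_semiring :: "('a, 'b) stm_scheme \<Rightarrow> bool" where
  "supertropical_semiring U \<longleftrightarrow> supertropical_monoid U \<and>
     (\<forall>x\<in>stcar U. \<forall>y\<in>stcar U. \<forall>z\<in>stcar U.
        sadd U (sadd U x y) z = sadd U x (sadd U y z)) \<and>
     (\<forall>x\<in>stcar U. \<forall>y\<in>stcar U. \<forall>z\<in>stcar U.
        smul U x (sadd U y z) = sadd U (smul U x y) (smul U x z))"

definition transmission ::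
  "('a, 'c) stm_scheme \<Rightarrow> ('b, 'd) stm_scheme \<Rightarrow> ('a \<Rightarrow> 'b) \<Rightarrow> bool" where
  "transmission U V f \<longleftrightarrow>
     (\<forall>x\<in>stcar U. f x \<in> stcar V) \<and>
     f (szero U) = szero V \<and> f (sone U) = sone V \<and>
     (\<forall>x\<in>stcar U. \<forall>y\<in>stcar U. f (smul U x y) = smul V (f x) (f y)) \<and>
     f (se U) = se V \<and>
     (\<forall>x\<in>gh U. \<forall>y\<in>gh U. sle U x y \<longrightarrow> sle V (f x) (f y))"

definition ghost_kernel ::
  "('a, 'c) stm_scheme \<Rightarrow> ('b, 'd) stm_scheme \<Rightarrow> ('a \<Rightarrow> 'b) \<Rightarrow> 'a set" where
  "ghost_kernel U V f = {x \<in> stcar U. f x \<in> gh V}"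

definition zero_kernel ::
  "('a, 'c) stm_scheme \<Rightarrow> ('b, 'd) stm_scheme \<Rightarrow> ('a \<Rightarrow> 'b) \<Rightarrow> 'a set" where
  "zero_kernel U V f = {x \<in> stcar U. f x = szero V}"

definition fiber_contraction ::
  "('a, 'c) stm_scheme \<Rightarrow> ('b, 'd) stm_scheme \<Rightarrow> ('a \<Rightarrow> 'b) \<Rightarrow> bool" where
  "fiber_contraction U V f \<longleftrightarrow> transmission U V f \<and> f ` stcar U = stcar V \<and>
     bij_betw f (gh U) (gh V) \<and>
     (\<forall>x\<in>gh U. \<forall>y\<in>gh U. sle U x y \<longleftrightarrow> sle V (f x) (f y))"

definition fiber_contraction_over ::
  "'a set \<Rightarrow> ('a, 'c) stm_scheme \<Rightarrow> ('a, 'd) stm_scheme \<Rightarrow> ('a \<Rightarrow> 'a) \<Rightarrow> bool" where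
  "fiber_contraction_over N U V f \<longleftrightarrow> fiber_contraction U V f \<and>
     gh U = N \<and> gh V = N \<and> (\<forall>x\<in>N. f x = x)"

definition ideal_compression ::
  "('a, 'c) stm_scheme \<Rightarrow> ('a, 'd) stm_scheme \<Rightarrow> ('a \<Rightarrow> 'a) \<Rightarrow> bool" where
  "ideal_compression U V f \<longleftrightarrow> fiber_contraction_over (gh U) U V f \<and>
     bij_betw f (stcar U - ghost_kernel U V f) (tang V)"

definition tangible_transmission ::
  "('a, 'c) stm_scheme \<Rightarrow> ('b, 'd) stm_scheme \<Rightarrow> ('a \<Rightarrow> 'b) \<Rightarrow> bool" where
  "tangible_transmission U V f \<longleftrightarrow> transmission U V f \<and>
     f ` tang U \<subseteq> tang V \<union> {szero V}"

definition ghost_contraction ::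
  "('a, 'c) stm_scheme \<Rightarrow> ('b, 'd) stm_scheme \<Rightarrow> ('a \<Rightarrow> 'b) \<Rightarrow> bool" where
  "ghost_contraction U V f \<longleftrightarrow> transmission U V f \<and> f ` gh U = gh V \<and>
     bij_betw f (stcar U - (gh U \<union> zero_kernel U V f)) (tang V)"

definition strict_ghost_contraction ::
  "('a, 'c) stm_scheme \<Rightarrow> ('b, 'd) stm_scheme \<Rightarrow> ('a \<Rightarrow> 'b) \<Rightarrow> bool" where
  "strict_ghost_contraction U V f \<longleftrightarrow> ghost_contraction U V f \<and>
     zero_kernel U V f \<subseteq> gh U"

end

theory Submission
  imports Defs
begin

text \<open>A supertropical monoid U is a semiring exactly when it is ghost distributive:
  whenever \<open>ey < ez\<close> and \<open>e(xy) = e(xz)\<close>, the product \<open>xz\<close> is already ghost.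
  This condition passes from U to its image under the ideal compression \<open>\<lambda>\<close>, since the
  ghost part of \<open>\<lambda>\<close> is an order isomorphism; and it passes back from V to \<open>V\<^sub>1\<close> along the
  tangible fiber contraction \<open>\<mu>\<close>, which sends a tangible nonzero \<open>xz\<close> to a tangible
  element.\<close>

definition ghost_distributive :: "('a, 'b) stm_scheme \<Rightarrow> bool" where
  "ghost_distributive U \<longleftrightarrow>
     (\<forall>x\<in>stcar U. \<forall>y\<in>stcar U. \<forall>z\<in>stcar U.
        slt U (smul U (se U) y) (smul U (se U) z) \<longrightarrow>
        smul U (se U) (smul U x y) = smul U (se U) (smul U x z) \<longrightarrow>
        smul U x z \<in> gh U)"

locale st_monoid =
  fixes U :: "('a, 'c) stm_scheme"
  assumes supertropical: "supertropical_monoid U"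
begin

abbreviation ghost :: "'a \<Rightarrow> 'a" where
  "ghost x \<equiv> smul U (se U) x"

lemmas supertropical_axioms = supertropical[unfolded supertropical_monoid_def]

lemma smul_closed: "x \<in> stcar U \<Longrightarrow> y \<in> stcar U \<Longrightarrow> smul U x y \<in> stcar U"
  using supertropical_axioms by auto

lemma se_in_car: "se U \<in> stcar U"
  using supertropical_axioms by blast

lemma szero_in_car: "szero U \<in> stcar U"
  using supertropical_axioms by blast

lemma smul_assoc: "x \<in> stcar U \<Longrightarrow> y \<in> stcar U \<Longrightarrow> z \<in> stcar U \<Longrightarrow>
     smul U (smul U x y) z = smul U x (smul U y z)"
  using supertropical_axioms by blast

lemma smul_comm: "x \<in> stcar U \<Longrightarrow> y \<in> stcar U \<Longrightarrow> smul U x y = smul U y x"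
  using supertropical_axioms by blast

lemma se_idem: "smul U (se U) (se U) = se U"
  using supertropical_axioms by blast

lemma szero_mul: "x \<in> stcar U \<Longrightarrow> smul U (szero U) x = szero U"
  using supertropical_axioms by blast

lemma ghost_eq_szeroD: "x \<in> stcar U \<Longrightarrow> ghost x = szero U \<Longrightarrow> x = szero U"
  using supertropical_axioms by blast

lemma sle_antisym: "a \<in> gh U \<Longrightarrow> b \<in> gh U \<Longrightarrow> sle U a b \<Longrightarrow> sle U b a \<Longrightarrow> a = b"
  using supertropical_axioms by blast

lemma sle_trans: "a \<in> gh U \<Longrightarrow> b \<in> gh U \<Longrightarrow> c \<in> gh U \<Longrightarrow>
     sle U a b \<Longrightarrow> sle U b c \<Longrightarrow> sle U a c"
  using supertropical_axioms by blast

lemma sle_total: "a \<in> gh U \<Longrightarrow> b \<in> gh U \<Longrightarrow> sle U a b \<or> sle U b a"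
  using supertropical_axioms by blast

lemma sle_mult_right: "a \<in> gh U \<Longrightarrow> b \<in> gh U \<Longrightarrow> c \<in> gh U \<Longrightarrow>
     sle U a b \<Longrightarrow> sle U (smul U a c) (smul U b c)"
  using supertropical_axioms by blast

lemma ghost_in_gh: "x \<in> stcar U \<Longrightarrow> ghost x \<in> gh U"
  unfolding gh_def by blast

lemma gh_subset_car: "gh U \<subseteq> stcar U"
  unfolding gh_def using smul_closed se_in_car by blast

lemma ghost_idem:
  assumes "g \<in> gh U"
  shows "ghost g = g"
proof -
  obtain w where w: "w \<in> stcar U" and g: "g = ghost w"
    using assms unfolding gh_def by blast
  show ?thesis
    using smul_assoc[OF se_in_car se_in_car w] se_idem g by simp
qed

lemma ghost_szero: "ghost (szero U) = szero U"
  using smul_comm[OF se_in_car szero_in_car] szero_mul[OF se_in_car] by simp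

lemma szero_in_gh: "szero U \<in> gh U"
  using ghost_in_gh[OF szero_in_car] ghost_szero by simp

lemma smul_ghost_right:
  assumes x: "x \<in> stcar U" and y: "y \<in> stcar U"
  shows "smul U x (ghost y) = ghost (smul U x y)"
proof -
  have "smul U x (ghost y) = smul U (smul U x (se U)) y"
    using smul_assoc[OF x se_in_car y] by simp
  also have "\<dots> = ghost (smul U x y)"
    using smul_comm[OF x se_in_car] smul_assoc[OF se_in_car x y] by simp
  finally show ?thesis .
qed

lemma ghost_smul:
  assumes x: "x \<in> stcar U" and y: "y \<in> stcar U"
  shows "smul U (ghost x) (ghost y) = ghost (smul U x y)"
proof -
  have ey: "ghost y \<in> stcar U"
    using smul_closed[OF se_in_car y] .
  have "smul U (ghost x) (ghost y) = ghost (smul U x (ghost y))"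
    using smul_assoc[OF se_in_car x ey] .
  also have "\<dots> = ghost (smul U x y)"
    using smul_ghost_right[OF x y] ghost_idem ghost_in_gh smul_closed[OF x y] by simp
  finally show ?thesis .
qed

lemma ghost_smul_mono:
  assumes x: "x \<in> stcar U" and y: "y \<in> stcar U" and z: "z \<in> stcar U"
    and le: "sle U (ghost y) (ghost z)"
  shows "sle U (ghost (smul U x y)) (ghost (smul U x z))"
  using sle_mult_right[OF ghost_in_gh[OF y] ghost_in_gh[OF z] ghost_in_gh[OF x] le]
  by (simp add: ghost_smul smul_comm x y z)

lemma slt_irrefl: "\<not> slt U a a"
  unfolding slt_def by simp

lemma slt_asym: "a \<in> gh U \<Longrightarrow> b \<in> gh U \<Longrightarrow> slt U a b \<Longrightarrow> \<not> slt U b a"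
  unfolding slt_def using sle_antisym by blast

lemma slt_trans: "a \<in> gh U \<Longrightarrow> b \<in> gh U \<Longrightarrow> c \<in> gh U \<Longrightarrow> slt U a b \<Longrightarrow> slt U b c \<Longrightarrow> slt U a c"
  unfolding slt_def using sle_antisym sle_trans by blast

lemma slt_trichotomy: "a \<in> gh U \<Longrightarrow> b \<in> gh U \<Longrightarrow> slt U a b \<or> a = b \<or> slt U b a"
  unfolding slt_def using sle_total by blast

lemma sadd_eq: "sadd U x y =
    (if slt U (ghost x) (ghost y) then y else if slt U (ghost y) (ghost x) then x else ghost x)"
  unfolding sadd_def Let_def ..

lemma ghost_sadd: "x \<in> stcar U \<Longrightarrow> y \<in> stcar U \<Longrightarrow>
    ghost (sadd U x y) = (if slt U (ghost x) (ghost y) then ghost y else ghost x)"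
  unfolding sadd_eq using ghost_idem ghost_in_gh by auto

lemma sadd_comm:
  assumes "x \<in> stcar U" "y \<in> stcar U"
  shows "sadd U x y = sadd U y x"
  using slt_trichotomy[OF ghost_in_gh ghost_in_gh, OF assms]
    slt_asym[OF ghost_in_gh ghost_in_gh, OF assms]
  unfolding sadd_eq by auto

lemma sadd_assoc:
  assumes x: "x \<in> stcar U" and y: "y \<in> stcar U" and z: "z \<in> stcar U"
  shows "sadd U (sadd U x y) z = sadd U x (sadd U y z)"
proof -
  have a: "ghost x \<in> gh U" and b: "ghost y \<in> gh U" and c: "ghost z \<in> gh U"
    using ghost_in_gh x y z by auto
  have cmp: "(slt U p q \<and> \<not> slt U q p) \<or> p = q \<or> (slt U q p \<and> \<not> slt U p q)"
    if "p \<in> gh U" "q \<in> gh U" for p q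
    using slt_trichotomy[OF that] slt_asym that by blast
  note trans = slt_trans[OF a b c] slt_trans[OF a c b] slt_trans[OF b a c]
    slt_trans[OF b c a] slt_trans[OF c a b] slt_trans[OF c b a]
  show ?thesis
    using cmp[OF a b] cmp[OF b c] cmp[OF a c]
    apply (simp only: sadd_eq[of "sadd U x y"] sadd_eq[of x "sadd U y z"] ghost_sadd x y z)
    apply (elim disjE conjE)
    apply (simp_all add: ghost_idem[OF a] ghost_idem[OF b] ghost_idem[OF c] slt_irrefl sadd_eq)
    apply (blast dest: trans)+
    done
qed

lemma smul_sadd_of_slt:
  assumes x: "x \<in> stcar U" and y: "y \<in> stcar U" and z: "z \<in> stcar U"
    and lt: "slt U (ghost y) (ghost z)"
    and collapse: "ghost (smul U x y) = ghost (smul U x z) \<Longrightarrow> smul U x z \<in> gh U"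
  shows "smul U x (sadd U y z) = sadd U (smul U x y) (smul U x z)"
proof -
  have yz: "sadd U y z = z"
    using lt unfolding sadd_eq by simp
  have le: "sle U (ghost (smul U x y)) (ghost (smul U x z))"
    using ghost_smul_mono[OF x y z] lt unfolding slt_def by blast
  have "sadd U (smul U x y) (smul U x z) = smul U x z"
  proof (cases "ghost (smul U x y) = ghost (smul U x z)")
    case True
    then have "ghost (smul U x z) = smul U x z"
      using collapse ghost_idem by blast
    with True show ?thesis
      unfolding sadd_eq by (simp add: slt_irrefl)
  next
    case False
    with le show ?thesis
      unfolding sadd_eq slt_def by simp
  qed
  then show ?thesis
    using yz by simp
qed

lemma smul_sadd_of_ghost_eq:
  assumes x: "x \<in> stcar U" and y: "y \<in> stcar U" and z: "z \<in> stcar U"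
    and eq: "ghost y = ghost z"
  shows "smul U x (sadd U y z) = sadd U (smul U x y) (smul U x z)"
proof -
  have "ghost (smul U x y) = ghost (smul U x z)"
    using smul_ghost_right[OF x y] smul_ghost_right[OF x z] eq by simp
  moreover have "sadd U y z = ghost y"
    using eq unfolding sadd_eq by (simp add: slt_irrefl)
  ultimately show ?thesis
    using smul_ghost_right[OF x y] unfolding sadd_eq by (simp add: slt_irrefl)
qed

lemma semiring_iff_ghost_distributive:
  "supertropical_semiring U \<longleftrightarrow> ghost_distributive U"
proof
  assume S: "supertropical_semiring U"
  show "ghost_distributive U"
    unfolding ghost_distributive_def
  proof (intro ballI impI)
    fix x y z assume x: "x \<in> stcar U" and y: "y \<in> stcar U" and z: "z \<in> stcar U"
      and lt: "slt U (ghost y) (ghost z)"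
      and eq: "ghost (smul U x y) = ghost (smul U x z)"
    have "smul U x z = smul U x (sadd U y z)"
      using lt unfolding sadd_eq by simp
    also have "\<dots> = sadd U (smul U x y) (smul U x z)"
      using S x y z unfolding supertropical_semiring_def by blast
    also have "\<dots> = ghost (smul U x y)"
      using eq unfolding sadd_eq by (simp add: slt_irrefl)
    finally show "smul U x z \<in> gh U"
      using ghost_in_gh[OF smul_closed[OF x y]] by simp
  qed
next
  assume D: "ghost_distributive U"
  have distrib: "smul U x (sadd U y z) = sadd U (smul U x y) (smul U x z)"
    if x: "x \<in> stcar U" and y: "y \<in> stcar U" and z: "z \<in> stcar U" for x y z
  proof -
    have collapse: "smul U x q \<in> gh U"
      if "p \<in> stcar U" "q \<in> stcar U" "slt U (ghost p) (ghost q)"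
        "ghost (smul U x p) = ghost (smul U x q)" for p q
      using D x that unfolding ghost_distributive_def by blast
    consider "slt U (ghost y) (ghost z)" | "ghost y = ghost z" | "slt U (ghost z) (ghost y)"
      using slt_trichotomy ghost_in_gh y z by blast
    then show ?thesis
    proof cases
      case 1
      then show ?thesis using smul_sadd_of_slt[OF x y z] collapse y z by blast
    next
      case 2
      then show ?thesis using smul_sadd_of_ghost_eq[OF x y z] by blast
    next
      case 3
      then have "smul U x (sadd U z y) = sadd U (smul U x z) (smul U x y)"
        using smul_sadd_of_slt[OF x z y] collapse y z by metis
      then show ?thesis
        using sadd_comm y z smul_closed x by metis
    qed
  qed
  show "supertropical_semiring U"
    unfolding supertropical_semiring_def
    using supertropical sadd_assoc distrib by blast
qed

end

lemma transmission_ghost: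
  assumes f: "transmission U W f" and U: "supertropical_monoid U" and x: "x \<in> stcar U"
  shows "f (smul U (se U) x) = smul W (se W) (f x)"
proof -
  have "se U \<in> stcar U"
    using st_monoid.se_in_car[OF st_monoid.intro[OF U]] .
  then have "f (smul U (se U) x) = smul W (f (se U)) (f x)"
    using f x unfolding transmission_def by blast
  then show ?thesis
    using f unfolding transmission_def by simp
qed

lemma transmission_gh:
  assumes f: "transmission U W f" and U: "supertropical_monoid U" and W: "supertropical_monoid W"
    and g: "g \<in> gh U"
  shows "f g \<in> gh W"
proof -
  interpret U: st_monoid U by (rule st_monoid.intro) fact
  interpret W: st_monoid W by (rule st_monoid.intro) fact
  have g_car: "g \<in> stcar U"
    using g U.gh_subset_car by blast
  then have "f g \<in> stcar W"
    using f unfolding transmission_def by blast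
  moreover have "f g = W.ghost (f g)"
    using transmission_ghost[OF f U g_car] U.ghost_idem[OF g] by simp
  ultimately show ?thesis
    using W.ghost_in_gh by metis
qed

lemma ghost_distributive_image:
  assumes f: "transmission U W f" and surj: "f ` stcar U = stcar W"
    and inj: "inj_on f (gh U)"
    and reflect: "\<forall>a\<in>gh U. \<forall>b\<in>gh U. sle W (f a) (f b) \<longrightarrow> sle U a b"
    and U: "supertropical_monoid U" and W: "supertropical_monoid W"
    and D: "ghost_distributive U"
  shows "ghost_distributive W"
  unfolding ghost_distributive_def
proof (intro ballI impI)
  interpret U: st_monoid U by (rule st_monoid.intro) fact
  interpret W: st_monoid W by (rule st_monoid.intro) fact
  have fmul: "f (smul U x y) = smul W (f x) (f y)" if "x \<in> stcar U" "y \<in> stcar U" for x y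
    using f that unfolding transmission_def by blast
  have fghost: "f (U.ghost x) = W.ghost (f x)" if "x \<in> stcar U" for x
    using transmission_ghost[OF f U that] .
  fix x' y' z' assume "x' \<in> stcar W" "y' \<in> stcar W" "z' \<in> stcar W"
    and lt': "slt W (W.ghost y') (W.ghost z')"
    and eq': "W.ghost (smul W x' y') = W.ghost (smul W x' z')"
  then obtain x y z where x: "x \<in> stcar U" and y: "y \<in> stcar U" and z: "z \<in> stcar U"
    and x': "x' = f x" and y': "y' = f y" and z': "z' = f z"
    unfolding surj[symmetric] by blast
  have "slt W (f (U.ghost y)) (f (U.ghost z))"
    using lt' fghost y z unfolding y' z' by simp
  then have "slt U (U.ghost y) (U.ghost z)"
    using reflect U.ghost_in_gh[OF y] U.ghost_in_gh[OF z] unfolding slt_def by auto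
  moreover have "f (U.ghost (smul U x y)) = f (U.ghost (smul U x z))"
    using eq' fghost fmul U.smul_closed x y z unfolding x' y' z' by simp
  then have "U.ghost (smul U x y) = U.ghost (smul U x z)"
    using inj U.ghost_in_gh U.smul_closed x y z by (meson inj_onD)
  ultimately have "smul U x z \<in> gh U"
    using D x y z unfolding ghost_distributive_def by blast
  then show "smul W x' z' \<in> gh W"
    using transmission_gh[OF f U W] fmul[OF x z] unfolding x' z' by metis
qed

lemma ghost_distributive_preimage:
  assumes f: "tangible_transmission W V f"
    and inj: "inj_on f (gh W)"
    and W: "supertropical_monoid W" and V: "supertropical_monoid V"
    and D: "ghost_distributive V"
  shows "ghost_distributive W"
  unfolding ghost_distributive_def
proof (intro ballI impI)
  interpret W: st_monoid W by (rule st_monoid.intro) fact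
  interpret V: st_monoid V by (rule st_monoid.intro) fact
  have ft: "transmission W V f" and tangible: "f ` tang W \<subseteq> tang V \<union> {szero V}"
    using f unfolding tangible_transmission_def by blast+
  have fcar: "f x \<in> stcar V" if "x \<in> stcar W" for x
    using ft that unfolding transmission_def by blast
  have fmul: "f (smul W x y) = smul V (f x) (f y)" if "x \<in> stcar W" "y \<in> stcar W" for x y
    using ft that unfolding transmission_def by blast
  have fghost: "f (W.ghost x) = V.ghost (f x)" if "x \<in> stcar W" for x
    using transmission_ghost[OF ft W that] .
  have mono: "sle V (f a) (f b)" if "a \<in> gh W" "b \<in> gh W" "sle W a b" for a b
    using ft that unfolding transmission_def by blast
  fix x y z assume x: "x \<in> stcar W" and y: "y \<in> stcar W" and z: "z \<in> stcar W"
    and lt: "slt W (W.ghost y) (W.ghost z)"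
    and eq: "W.ghost (smul W x y) = W.ghost (smul W x z)"
  let ?xz = "smul W x z"
  have xz: "?xz \<in> stcar W"
    using W.smul_closed[OF x z] .
  have "slt V (f (W.ghost y)) (f (W.ghost z))"
    using lt mono[OF W.ghost_in_gh[OF y] W.ghost_in_gh[OF z]]
      inj_onD[OF inj _ W.ghost_in_gh[OF y] W.ghost_in_gh[OF z]]
    unfolding slt_def by blast
  then have "slt V (V.ghost (f y)) (V.ghost (f z))"
    using fghost y z by simp
  moreover have "V.ghost (smul V (f x) (f y)) = V.ghost (smul V (f x) (f z))"
    using eq fghost[OF W.smul_closed[OF x y]] fghost[OF xz] fmul[OF x y] fmul[OF x z] by simp
  ultimately have "smul V (f x) (f z) \<in> gh V"
    using D fcar[OF x] fcar[OF y] fcar[OF z] unfolding ghost_distributive_def by blast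
  then have fxz_gh: "f ?xz \<in> gh V"
    using fmul[OF x z] by simp
  show "?xz \<in> gh W"
  proof (rule ccontr)
    assume nongh: "?xz \<notin> gh W"
    have "f ?xz \<noteq> szero V"
    proof
      assume "f ?xz = szero V"
      then have "f (W.ghost ?xz) = f (szero W)"
        using fghost[OF xz] V.ghost_szero ft unfolding transmission_def by simp
      then have "W.ghost ?xz = szero W"
        using inj_onD[OF inj _ W.ghost_in_gh[OF xz] W.szero_in_gh] by blast
      then show False
        using nongh W.ghost_eq_szeroD[OF xz] W.szero_in_gh by simp
    qed
    moreover have "f ?xz \<in> tang V \<union> {szero V}"
      using tangible nongh xz unfolding tang_def by blast
    ultimately show False
      using fxz_gh unfolding tang_def by blast
  qed
qed

lemma semiring_fiber_contraction_image:
  assumes "fiber_contraction U W f" and "supertropical_semiring U" and "supertropical_monoid W"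
  shows "supertropical_semiring W"
proof -
  have U: "supertropical_monoid U"
    using assms(2) unfolding supertropical_semiring_def by blast
  have "ghost_distributive U"
    using assms(2) st_monoid.semiring_iff_ghost_distributive[OF st_monoid.intro[OF U]] by blast
  moreover have "transmission U W f" "f ` stcar U = stcar W" "inj_on f (gh U)"
    and "\<forall>a\<in>gh U. \<forall>b\<in>gh U. sle W (f a) (f b) \<longrightarrow> sle U a b"
    using assms(1) unfolding fiber_contraction_def bij_betw_def by simp_all
  ultimately have "ghost_distributive W"
    using ghost_distributive_image[OF _ _ _ _ U assms(3)] by blast
  then show ?thesis
    using st_monoid.semiring_iff_ghost_distributive[OF st_monoid.intro[OF assms(3)]] by blast
qed

lemma semiring_tangible_fiber_contraction_preimage:
  assumes "tangible_transmission W V f" and "fiber_contraction W V f"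
    and "supertropical_monoid W" and "supertropical_semiring V"
  shows "supertropical_semiring W"
proof -
  have V: "supertropical_monoid V"
    using assms(4) unfolding supertropical_semiring_def by blast
  have "ghost_distributive V"
    using assms(4) st_monoid.semiring_iff_ghost_distributive[OF st_monoid.intro[OF V]] by blast
  moreover have "inj_on f (gh W)"
    using assms(2) unfolding fiber_contraction_def bij_betw_def by blast
  ultimately have "ghost_distributive W"
    using ghost_distributive_preimage[OF assms(1) _ assms(3) V] by blast
  then show ?thesis
    using st_monoid.semiring_iff_ghost_distributive[OF st_monoid.intro[OF assms(3)]] by blast
qed

theorem theorem2p9:
  fixes U U1 :: "'a stm" and V1 V :: "'b stm"
    and alpha :: "'a \<Rightarrow> 'b" and lam :: "'a \<Rightarrow> 'a"
    and beta :: "'a \<Rightarrow> 'b" and mu :: "'b \<Rightarrow> 'b"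
  assumes "supertropical_semiring U" and "supertropical_semiring V"
    and "supertropical_monoid U1" and "supertropical_monoid V1"
    and "transmission U V alpha" and "alpha ` stcar U = stcar V"
    and "ideal_compression U U1 lam"
    and "strict_ghost_contraction U1 V1 beta"
    and "tangible_transmission V1 V mu"
    and "fiber_contraction_over (gh V) V1 V mu"
    and "\<forall>x\<in>stcar U. alpha x = mu (beta (lam x))"
  shows "supertropical_semiring U1 \<and> supertropical_semiring V1"
proof
  have "fiber_contraction U U1 lam"
    using assms(7) unfolding ideal_compression_def fiber_contraction_over_def by blast
  then show "supertropical_semiring U1"
    using semiring_fiber_contraction_image assms(1,3) by blast
  have "fiber_contraction V1 V mu"
    using assms(10) unfolding fiber_contraction_over_def by blast
  then show "supertropical_semiring V1"
    using semiring_tangible_fiber_contraction_preimage assms(2,4,9) by blast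
qed

end
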